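(* Let $PG_n$ be the random pentagonal chain network described in the context, and assume Hypotheses 1 and 2 of the context hold. Then: (i) For $n\ge 1$, $$Var\big(Gut(PG_{n})\big)=\frac{1}{30}\Big(\sigma^{2}_{1}n^{5}-5r_{1}n^{4}+10\tilde{\sigma}^{2}_{1}n^{3}+(65r_{1}-30\sigma^{2}_{1}-45\tilde{\sigma}^{2}_{1})n^{2}+(59\sigma^{2}_{1}+65\tilde{\sigma}^{2}_{1}-120r_{1})n+(60r_{1}-30\sigma^{2}_{1}-30\tilde{\sigma}^{2}_{1})\Big),$$ where $\sigma^{2}_{1}=288^{2}p_{1}+432^{2}(1-p_{1})-\big(288p_{1}+432(1-p_{1})\big)^{2}$, $\tilde{\sigma}^{2}_{1}=156^{2}p_{1}+300^{2}(1-p_{1})-\big(156p_{1}+300(1-p_{1})\big)^{2}$, $r_{1}=288\cdot156\cdot p_{1}+432\cdot300\cdot(1-p_{1})-\big(288p_{1}+432(1-p_{1})\big)\big(156p_{1}+300(1-p_{1})\big)$. (ii) $Gut(PG_n)$ is asymptotically normal: $$\lim_{n\rightarrow \infty}\sup_{a\in \mathbb{R}}\Big| \mathbb{P}\Big(\frac{Gut(PG_{n})-\mathbb{E}\big(Gut(PG_{n})\big)}{\sqrt{Var\big(Gut(PG_{n})\big)}}\leq a\Big)-\int^{a}_{-\infty}\frac{1}{\sqrt{2\pi}}e^{-t^{2}/2}\,dt \Big| =0.$$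
   Context: Random chain network $PG_n$: $PG_1$ is a $5$-cycle (pentagon). For $n\ge 1$, $PG_{n+1}$ is obtained from $PG_n$ by adding a new pentagon $O_{n+1}$ with vertices $x_1,\dots,x_5$ in cyclic order and adding one edge joining $x_1$ to a vertex $u_n$ of $PG_n$. The vertex $u_1$ is any vertex of $PG_1$. For $n\ge 2$, $u_n$ is a vertex of the last pentagon $O_n$ (whose vertex $x_1$ is the one joined to $u_{n-1}$): either $u_n\in\{x_2,x_5\}$ of $O_n$ (neighbours of $x_1$ in $O_n$; set $Z_n^1=1$, $Z_n^2=0$) or $u_n\in\{x_3,x_4\}$ of $O_n$ (vertices at distance $2$ from $x_1$ in $O_n$; set $Z_n^1=0$, $Z_n^2=1$), with $\mathbb{P}(Z_n^1=1)=p_1$, $\mathbb{P}(Z_n^2=1)=p_2=1-p_1$, constants independent of $n$. Hypothesis 1: the random vectors $(Z_n^1,Z_n^2)$, $n=2,3,\dots$, are independent. Hypothesis 2: $0<p_i<1$ for $i=1,2$. For a graph $G$, $d(v)$ is the degree of $v$, $d(u,v)$ the shortest-path distance, and the Gutman index is $Gut(G)=\sum_{\{u,v\}\subseteq V_G} d(u)d(v)\,d(u,v)$ over unordered pairs of distinct vertices. *)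

theory Defs
  imports "HOL-Probability.Probability"
begin

text \<open>Vertex (i,j) of the pentagonal chain: vertex x_(j+1) of pentagon O_i, with
  i in {1..n}, j in {0..4}; cycle order x_1,...,x_5 corresponds to j = 0,...,4.
  The attachment function u gives, for each i < n, the index j = u i of the vertex
  u_i of O_i that is joined to x_1 = (i+1,0) of O_(i+1).\<close>

definition pg_verts :: "nat \<Rightarrow> (nat \<times> nat) set" where
  "pg_verts n = {1..n} \<times> {..<5}"

definition pg_edges :: "(nat \<Rightarrow> nat) \<Rightarrow> nat \<Rightarrow> ((nat \<times> nat) \<times> (nat \<times> nat)) set" where
  "pg_edges u n = {((i,j),(i',j')).
      (i \<in> {1..n} \<and> i' = i \<and> j < 5 \<and> j' < 5 \<and> (j' = (j+1) mod 5 \<or> j = (j'+1) mod 5))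
    \<or> (1 \<le> i \<and> i < n \<and> j = u i \<and> i' = i + 1 \<and> j' = 0)
    \<or> (1 \<le> i' \<and> i' < n \<and> j' = u i' \<and> i = i' + 1 \<and> j = 0)}"

definition pg_deg :: "(nat \<Rightarrow> nat) \<Rightarrow> nat \<Rightarrow> nat \<times> nat \<Rightarrow> nat" where
  "pg_deg u n v = card {w. (v, w) \<in> pg_edges u n}"

definition pg_dist :: "(nat \<Rightarrow> nat) \<Rightarrow> nat \<Rightarrow> nat \<times> nat \<Rightarrow> nat \<times> nat \<Rightarrow> nat" where
  "pg_dist u n v w = (LEAST k. (v, w) \<in> (pg_edges u n) ^^ k)"

text \<open>Gutman index: sum over unordered pairs of distinct vertices
  (= half the sum over ordered pairs).\<close>
definition gut :: "(nat \<Rightarrow> nat) \<Rightarrow> nat \<Rightarrow> real" where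
  "gut u n = (\<Sum>v\<in>pg_verts n. \<Sum>w\<in>pg_verts n - {v}.
       real (pg_deg u n v * pg_deg u n w * pg_dist u n v w)) / 2"

end

(*
  A shortest path between two pentagons runs through the attachment vertices of
  all pentagons in between, so every distance is an affine function of the cyclic distances
  d_k = d(x_1, u_k) inside the pentagons O_k.  Summing the degree weights on both sides of
  pentagon k gives  Gut(PG_n) = Gut_0(n) + sum_{1<k<n} 144 (k-1) (n-k) d_k,  where d_k is
  1 or 2 according as Z_k^1 = 1 or 0.  Hence the variance is
  p_1 (1-p_1) 144^2 sum_k (k-1)^2 (n-k)^2 = p_1 (1-p_1) 144^2 ((n-1)^5 - (n-1)) / 30,
  and since the largest weight is O(n^2) while the standard deviation grows like n^(5/2),
  a Lyapunov estimate of characteristic functions yields convergence to the standard normal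
  law; Polya's theorem upgrades it to uniform convergence of distribution functions.
*)

theory Submission
  imports Defs "HOL-Real_Asymp.Real_Asymp"
begin

lemma sum_lessThan_5: "(\<Sum>j<(5::nat). f j) = f 0 + f 1 + f 2 + f 3 + (f 4 :: 'a::comm_monoid_add)"
  by (simp add: numeral_eq_Suc add.assoc)

lemma sum_sum_mult_add3:
  fixes a b x y :: "'i \<Rightarrow> 'a::comm_ring"
  shows "(\<Sum>j\<in>A. \<Sum>j'\<in>B. a j * b j' * (x j + c + y j')) =
     (\<Sum>j\<in>A. a j * x j) * sum b B + c * (sum a A * sum b B) + sum a A * (\<Sum>j'\<in>B. b j' * y j')"
proof -
  have "a j * b j' * (x j + c + y j') = a j * x j * b j' + c * (a j * b j') + a j * (b j' * y j')" for j j'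
    by (simp add: algebra_simps)
  then show ?thesis by (simp only: sum.distrib sum_product sum_distrib_left[of c])
qed

lemma sum_symmetric_square:
  fixes T :: "'a::linorder \<Rightarrow> 'a \<Rightarrow> 'b::comm_semiring_1"
  assumes fin: "finite A" and sym: "\<And>i i'. T i i' = T i' i"
  shows "(\<Sum>i\<in>A. \<Sum>i'\<in>A. T i i') = (\<Sum>i\<in>A. T i i) + 2 * (\<Sum>i\<in>A. \<Sum>i'\<in>{i'\<in>A. i < i'}. T i i')"
proof -
  have split: "(\<Sum>i'\<in>A. T i i') = T i i + (\<Sum>i'\<in>{i'\<in>A. i < i'}. T i i') + (\<Sum>i'\<in>{i'\<in>A. i' < i}. T i i')"
    if "i \<in> A" for i
  proof -
    have "A = insert i ({i'\<in>A. i < i'} \<union> {i'\<in>A. i' < i})" using that by auto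
    moreover have "i \<notin> {i'\<in>A. i < i'} \<union> {i'\<in>A. i' < i}" by auto
    moreover have "{i'\<in>A. i < i'} \<inter> {i'\<in>A. i' < i} = {}" by auto
    ultimately show ?thesis
      using fin by (metis (no_types, lifting) add.assoc finite_Un finite_insert sum.insert sum.union_disjoint)
  qed
  have "(\<Sum>i\<in>A. \<Sum>i'\<in>{i'\<in>A. i' < i}. T i i') = (\<Sum>i'\<in>A. \<Sum>i\<in>{i\<in>A. i' < i}. T i i')"
    by (rule sum.swap_restrict[OF fin fin])
  also have "\<dots> = (\<Sum>i\<in>A. \<Sum>i'\<in>{i'\<in>A. i < i'}. T i i')"
    by (simp add: sym)
  finally show ?thesis by (simp add: split sum.distrib mult_2 add.assoc)
qed

lemma sum_triangle_swap:
  "(\<Sum>i\<in>{m..n}. \<Sum>i'\<in>{Suc i..n}. f i i') = (\<Sum>i'\<in>{m..n::nat}. \<Sum>i\<in>{m..<i'}. f i i')"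
proof -
  have "(\<Sum>i\<in>{m..n}. \<Sum>i'\<in>{Suc i..n}. f i i') = (\<Sum>i\<in>{m..n}. \<Sum>i'\<in>{i'\<in>{m..n}. i < i'}. f i i')"
    by (intro sum.cong refl arg_cong[where f = "\<lambda>I. sum _ I"]) auto
  also have "\<dots> = (\<Sum>i'\<in>{m..n}. \<Sum>i\<in>{i\<in>{m..n}. i < i'}. f i i')"
    by (rule sum.swap_restrict) auto
  also have "\<dots> = (\<Sum>i'\<in>{m..n}. \<Sum>i\<in>{m..<i'}. f i i')"
    by (intro sum.cong refl arg_cong[where f = "\<lambda>I. sum _ I"]) auto
  finally show ?thesis .
qed

section \<open>A central limit theorem for weighted sums of bounded independent variables\<close>

lemma abs_exp_neg_sub_linear_le:
  fixes x :: real
  assumes "0 \<le> x"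
  shows "\<bar>exp (- x) - (1 - x)\<bar> \<le> x\<^sup>2"
proof -
  have "exp (- x) \<le> 1 / (1 + x)"
    using exp_ge_add_one_self[of x] assms by (simp add: exp_minus field_simps)
  also have "\<dots> \<le> 1 - x + x\<^sup>2"
    using assms by (simp add: field_simps power2_eq_square)
  finally show ?thesis using exp_ge_add_one_self[of "- x"] by simp
qed

lemma prod_one_minus_approx_prod_exp:
  fixes x :: "'i \<Rightarrow> real"
  assumes "\<And>k. k \<in> K \<Longrightarrow> 0 \<le> x k" "\<And>k. k \<in> K \<Longrightarrow> x k \<le> c" "c \<le> 1"
  shows "\<bar>(\<Prod>k\<in>K. 1 - x k) - (\<Prod>k\<in>K. exp (- x k))\<bar> \<le> c * (\<Sum>k\<in>K. x k)"
proof -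
  have "\<bar>(\<Prod>k\<in>K. 1 - x k) - (\<Prod>k\<in>K. exp (- x k))\<bar> \<le> (\<Sum>k\<in>K. \<bar>(1 - x k) - exp (- x k)\<bar>)"
    using norm_prod_diff[of K "\<lambda>k. 1 - x k" "\<lambda>k. exp (- x k)"] assms by force
  also have "\<dots> \<le> (\<Sum>k\<in>K. c * x k)"
  proof (rule sum_mono)
    fix k assume k: "k \<in> K"
    have "\<bar>(1 - x k) - exp (- x k)\<bar> \<le> x k * x k"
      using abs_exp_neg_sub_linear_le[OF assms(1)[OF k]] by (simp add: abs_minus_commute power2_eq_square)
    also have "\<dots> \<le> c * x k" using assms k by (simp add: mult_right_mono)
    finally show "\<bar>(1 - x k) - exp (- x k)\<bar> \<le> c * x k" .
  qed
  finally show ?thesis by (simp add: sum_distrib_left)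
qed

locale bounded_centered_indep = prob_space +
  fixes X :: "'i \<Rightarrow> 'a \<Rightarrow> real" and I :: "'i set" and v :: real
  assumes indep: "indep_vars (\<lambda>_. borel) X I"
    and bounded: "\<And>i \<omega>. i \<in> I \<Longrightarrow> \<omega> \<in> space M \<Longrightarrow> \<bar>X i \<omega>\<bar> \<le> 1"
    and mean_zero: "\<And>i. i \<in> I \<Longrightarrow> expectation (X i) = 0"
    and second_moment: "\<And>i. i \<in> I \<Longrightarrow> expectation (\<lambda>\<omega>. (X i \<omega>)\<^sup>2) = v"
begin

lemma measurable_X [measurable]: "i \<in> I \<Longrightarrow> X i \<in> borel_measurable M"
  using indep by (simp add: indep_vars_def2)

lemma integrable_scaled_power: "i \<in> I \<Longrightarrow> integrable M (\<lambda>\<omega>. b * (X i \<omega>) ^ k)"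
  by (rule integrable_const_bound[where B = "\<bar>b\<bar>"])
     (auto simp: abs_mult power_abs intro!: mult_left_le power_le_one bounded)

lemma integrable_X: "i \<in> I \<Longrightarrow> integrable M (X i)"
  using integrable_scaled_power[of i 1 1] by simp

lemma expectation_mult_X:
  assumes "i \<in> I" "j \<in> I" "i \<noteq> j"
  shows "expectation (\<lambda>\<omega>. X i \<omega> * X j \<omega>) = 0"
proof -
  have "indep_vars (\<lambda>_. borel) X {i, j}"
    using indep_vars_subset[OF indep] assms by simp
  then have "expectation (\<lambda>\<omega>. \<Prod>k\<in>{i, j}. X k \<omega>) = (\<Prod>k\<in>{i, j}. expectation (X k))"
    using assms integrable_X by (intro indep_vars_lebesgue_integral) auto
  then show ?thesis using assms mean_zero by simp
qed

lemma expectation_weighted_sum_sq: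
  assumes "finite K" "K \<subseteq> I"
  shows "expectation (\<lambda>\<omega>. (\<Sum>k\<in>K. a k * X k \<omega>)\<^sup>2) = v * (\<Sum>k\<in>K. (a k)\<^sup>2)"
proof -
  have int: "integrable M (\<lambda>\<omega>. X k \<omega> * X l \<omega>)" if "k \<in> K" "l \<in> K" for k l
    by (rule integrable_const_bound[where B = 1])
       (use that assms in \<open>auto simp: abs_mult intro!: mult_le_one bounded borel_measurable_times measurable_X\<close>)
  have cross: "(\<Sum>l\<in>K. a k * a l * expectation (\<lambda>\<omega>. X k \<omega> * X l \<omega>)) = v * (a k)\<^sup>2" if "k \<in> K" for k
  proof -
    have "expectation (\<lambda>\<omega>. X k \<omega> * X l \<omega>) = 0" if "l \<in> K - {k}" for l
      using expectation_mult_X[of k l] that \<open>k \<in> K\<close> assms(2) by auto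
    then have "(\<Sum>l\<in>K. a k * a l * expectation (\<lambda>\<omega>. X k \<omega> * X l \<omega>))
        = a k * a k * expectation (\<lambda>\<omega>. X k \<omega> * X k \<omega>)"
      using that assms(1) by (subst sum.remove[of K k]) auto
    then show ?thesis
      using second_moment[of k] that assms by (auto simp: power2_eq_square)
  qed
  have "expectation (\<lambda>\<omega>. (\<Sum>k\<in>K. a k * X k \<omega>)\<^sup>2)
      = expectation (\<lambda>\<omega>. \<Sum>k\<in>K. \<Sum>l\<in>K. a k * a l * (X k \<omega> * X l \<omega>))"
    by (simp add: power2_eq_square sum_product algebra_simps)
  also have "\<dots> = (\<Sum>k\<in>K. \<Sum>l\<in>K. a k * a l * expectation (\<lambda>\<omega>. X k \<omega> * X l \<omega>))"
    using int by (simp add: integral_sum)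
  finally show ?thesis using cross by (simp add: sum_distrib_left)
qed

lemma char_scaled_approx:
  assumes i: "i \<in> I"
  shows "cmod (char (distr M borel (\<lambda>\<omega>. b * X i \<omega>)) t - complex_of_real (1 - t\<^sup>2 * (b\<^sup>2 * v) / 2))
    \<le> \<bar>t\<bar> ^ 3 * \<bar>b\<bar> * (b\<^sup>2 * v) / 6"
proof -
  let ?Y = "\<lambda>\<omega>. b * X i \<omega>"
  have int_Y: "integrable M ?Y" and int_Y2: "integrable M (\<lambda>\<omega>. (?Y \<omega>)\<^sup>2)"
    using integrable_scaled_power[OF i, of b 1] integrable_scaled_power[OF i, of "b\<^sup>2" 2]
    by (simp_all add: power_mult_distrib)
  have E_Y: "expectation ?Y = 0" using mean_zero[OF i] by simp
  have E_Y2: "expectation (\<lambda>\<omega>. (?Y \<omega>)\<^sup>2) = b\<^sup>2 * v"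
    using second_moment[OF i] by (simp add: power_mult_distrib)
  \<comment> \<open>the Lyapunov bound: \<open>|Y|\<^sup>3 \<le> |b| Y\<^sup>2\<close> since \<open>|X i| \<le> 1\<close>\<close>
  have cube: "min (6 * (?Y \<omega>)\<^sup>2) (\<bar>t\<bar> * \<bar>?Y \<omega>\<bar> ^ 3) \<le> \<bar>t\<bar> * \<bar>b\<bar> * (?Y \<omega>)\<^sup>2"
    if "\<omega> \<in> space M" for \<omega>
  proof -
    have "\<bar>y\<bar> ^ 3 = \<bar>y\<bar> * y\<^sup>2" for y :: real
      by (cases "y \<ge> 0") (auto simp: power2_eq_square power3_eq_cube)
    then have "\<bar>?Y \<omega>\<bar> ^ 3 = \<bar>b\<bar> * \<bar>X i \<omega>\<bar> * (?Y \<omega>)\<^sup>2"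
      by (simp only: abs_mult[symmetric])
    also have "\<dots> \<le> \<bar>b\<bar> * (?Y \<omega>)\<^sup>2"
      using bounded[OF i that] by (intro mult_right_mono) (auto intro: mult_left_le)
    finally show ?thesis by (simp add: mult_left_mono mult.assoc min.coboundedI2)
  qed
  have [measurable]: "X i \<in> borel_measurable M" using i by (rule measurable_X)
  have int_min: "integrable M (\<lambda>\<omega>. min (6 * (?Y \<omega>)\<^sup>2) (\<bar>t\<bar> * \<bar>?Y \<omega>\<bar> ^ 3))"
  proof (rule integrable_const_bound[where B = "6 * b\<^sup>2"])
    show "AE \<omega> in M. norm (min (6 * (?Y \<omega>)\<^sup>2) (\<bar>t\<bar> * \<bar>?Y \<omega>\<bar> ^ 3)) \<le> 6 * b\<^sup>2"
    proof (rule AE_I2)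
      fix \<omega> assume "\<omega> \<in> space M"
      then have "(?Y \<omega>)\<^sup>2 \<le> b\<^sup>2"
        using bounded[OF i] by (simp add: power_mult_distrib abs_square_le_1 mult_left_le)
      then show "norm (min (6 * (?Y \<omega>)\<^sup>2) (\<bar>t\<bar> * \<bar>?Y \<omega>\<bar> ^ 3)) \<le> 6 * b\<^sup>2" by simp
    qed
  qed measurable
  have "cmod (char (distr M borel ?Y) t - (1 - t\<^sup>2 * (b\<^sup>2 * v) / 2))
      \<le> (t\<^sup>2 / 6) * expectation (\<lambda>\<omega>. min (6 * (?Y \<omega>)\<^sup>2) (\<bar>t\<bar> * \<bar>?Y \<omega>\<bar> ^ 3))"
    using i int_Y int_Y2 E_Y E_Y2 by (intro char_approx3') auto
  also have "\<dots> \<le> (t\<^sup>2 / 6) * expectation (\<lambda>\<omega>. \<bar>t\<bar> * \<bar>b\<bar> * (?Y \<omega>)\<^sup>2)"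
    using int_min int_Y2 cube by (intro mult_left_mono integral_mono) auto
  also have "\<dots> = \<bar>t\<bar> ^ 3 * \<bar>b\<bar> * (b\<^sup>2 * v) / 6"
    using E_Y2 by (simp add: power2_eq_square power3_eq_cube abs_mult_self_eq)
  finally show ?thesis by simp
qed

lemma second_moment_le_1: "i \<in> I \<Longrightarrow> 0 \<le> v \<and> v \<le> 1"
  using second_moment[of i] integrable_scaled_power[of i 1 2]
    integral_mono[of M "\<lambda>\<omega>. (X i \<omega>)\<^sup>2" "\<lambda>_. 1"] bounded[of i] abs_square_le_1
  by (auto simp: prob_space intro!: integral_nonneg_AE)

lemma char_weighted_sum:
  "K \<subseteq> I \<Longrightarrow> char (distr M borel (\<lambda>\<omega>. \<Sum>k\<in>K. a k * X k \<omega>)) t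
     = (\<Prod>k\<in>K. char (distr M borel (\<lambda>\<omega>. a k * X k \<omega>)) t)"
  by (rule char_distr_sum, rule indep_vars_compose2[OF indep_vars_subset[OF indep]]) auto

lemma prod_char_scaled_approx:
  assumes K: "K \<subseteq> I" and sum_sq: "v * (\<Sum>k\<in>K. (a k)\<^sup>2) = 1"
    and bound: "\<And>k. k \<in> K \<Longrightarrow> \<bar>a k\<bar> \<le> d"
    and small: "\<And>k. k \<in> K \<Longrightarrow> t\<^sup>2 * ((a k)\<^sup>2 * v) / 2 \<le> 1"
  shows "cmod ((\<Prod>k\<in>K. char (distr M borel (\<lambda>\<omega>. a k * X k \<omega>)) t)
      - of_real (\<Prod>k\<in>K. 1 - t\<^sup>2 * ((a k)\<^sup>2 * v) / 2)) \<le> \<bar>t\<bar> ^ 3 * d / 6"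
proof -
  obtain k0 where "k0 \<in> K" using sum_sq by fastforce
  then have v: "0 \<le> v" using second_moment_le_1 K by auto
  have "cmod ((\<Prod>k\<in>K. char (distr M borel (\<lambda>\<omega>. a k * X k \<omega>)) t) - (\<Prod>k\<in>K. of_real (1 - t\<^sup>2 * ((a k)\<^sup>2 * v) / 2)))
      \<le> (\<Sum>k\<in>K. cmod (char (distr M borel (\<lambda>\<omega>. a k * X k \<omega>)) t - of_real (1 - t\<^sup>2 * ((a k)\<^sup>2 * v) / 2)))"
  proof (rule norm_prod_diff)
    fix k assume "k \<in> K"
    then have "0 \<le> t\<^sup>2 * ((a k)\<^sup>2 * v) / 2" "t\<^sup>2 * ((a k)\<^sup>2 * v) / 2 \<le> 1" using small v by auto
    then show "cmod (complex_of_real (1 - t\<^sup>2 * ((a k)\<^sup>2 * v) / 2)) \<le> 1" by (simp only: norm_of_real)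
    have "random_variable borel (\<lambda>\<omega>. a k * X k \<omega>)"
      using \<open>k \<in> K\<close> K by (intro borel_measurable_times borel_measurable_const measurable_X) auto
    then show "cmod (char (distr M borel (\<lambda>\<omega>. a k * X k \<omega>)) t) \<le> 1"
      by (intro real_distribution.cmod_char_le_1 real_distribution_distr)
  qed
  also have "\<dots> \<le> (\<Sum>k\<in>K. \<bar>t\<bar> ^ 3 * d * ((a k)\<^sup>2 * v) / 6)"
  proof (rule sum_mono)
    fix k assume k: "k \<in> K"
    have "\<bar>t\<bar> ^ 3 * \<bar>a k\<bar> * ((a k)\<^sup>2 * v) \<le> \<bar>t\<bar> ^ 3 * d * ((a k)\<^sup>2 * v)"
      using bound[OF k] v by (intro mult_right_mono mult_left_mono) auto
    then show "cmod (char (distr M borel (\<lambda>\<omega>. a k * X k \<omega>)) t - of_real (1 - t\<^sup>2 * ((a k)\<^sup>2 * v) / 2))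
        \<le> \<bar>t\<bar> ^ 3 * d * ((a k)\<^sup>2 * v) / 6"
      using char_scaled_approx[of k "a k" t] k K by (auto simp: mult_ac)
  qed
  also have "\<dots> = \<bar>t\<bar> ^ 3 * d / 6"
    using sum_sq by (simp add: sum_divide_distrib[symmetric] sum_distrib_left[symmetric] mult_ac)
  finally show ?thesis by simp
qed

lemma char_weighted_sum_approx:
  assumes K: "finite K" "K \<subseteq> I"
    and sum_sq: "v * (\<Sum>k\<in>K. (a k)\<^sup>2) = 1"
    and bound: "\<And>k. k \<in> K \<Longrightarrow> \<bar>a k\<bar> \<le> d"
    and small: "d * (\<bar>t\<bar> + 1) \<le> 1"
  shows "cmod (char (distr M borel (\<lambda>\<omega>. \<Sum>k\<in>K. a k * X k \<omega>)) t - complex_of_real (exp (- t\<^sup>2 / 2)))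
    \<le> \<bar>t\<bar> ^ 3 * d / 6 + t ^ 4 * d\<^sup>2 / 4"
proof -
  define x where "x k = t\<^sup>2 * ((a k)\<^sup>2 * v) / 2" for k
  obtain k0 where "k0 \<in> K" using sum_sq by fastforce
  then have v: "0 \<le> v" "v \<le> 1" and d: "0 \<le> d"
    using second_moment_le_1 K(2) bound[of k0] by auto
  have "\<bar>t\<bar> * d \<le> 1" using small d by (simp add: algebra_simps)
  then have td: "t\<^sup>2 * d\<^sup>2 \<le> 1"
    using d by (metis abs_mult abs_square_le_1 power_mult_distrib abs_of_nonneg abs_ge_zero mult_nonneg_nonneg)
  have x_le: "x k \<le> t\<^sup>2 * d\<^sup>2 / 2" if "k \<in> K" for k
  proof -
    have "(a k)\<^sup>2 * v \<le> d\<^sup>2 * 1"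
      using bound[OF that] v by (intro mult_mono) (auto simp: abs_le_square_iff[symmetric])
    then show ?thesis by (simp add: x_def mult_left_mono)
  qed
  have x_sum: "(\<Sum>k\<in>K. x k) = t\<^sup>2 / 2"
    using sum_sq by (simp add: x_def sum_distrib_left[symmetric] sum_divide_distrib[symmetric]
      sum_distrib_right[symmetric] mult_ac)
  have first: "cmod ((\<Prod>k\<in>K. char (distr M borel (\<lambda>\<omega>. a k * X k \<omega>)) t) - of_real (\<Prod>k\<in>K. 1 - x k))
      \<le> \<bar>t\<bar> ^ 3 * d / 6"
    unfolding x_def
  proof (rule prod_char_scaled_approx[OF K(2) sum_sq bound])
    show "t\<^sup>2 * ((a k)\<^sup>2 * v) / 2 \<le> 1" if "k \<in> K" for k
      using x_le[OF that] td unfolding x_def by linarith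
  qed
  have second: "\<bar>(\<Prod>k\<in>K. 1 - x k) - (\<Prod>k\<in>K. exp (- x k))\<bar> \<le> t ^ 4 * d\<^sup>2 / 4"
  proof -
    have "\<bar>(\<Prod>k\<in>K. 1 - x k) - (\<Prod>k\<in>K. exp (- x k))\<bar> \<le> t\<^sup>2 * d\<^sup>2 / 2 * (\<Sum>k\<in>K. x k)"
      using x_le td v by (intro prod_one_minus_approx_prod_exp) (auto simp: x_def)
    then show ?thesis unfolding x_sum by (simp add: power2_eq_square power4_eq_xxxx mult_ac)
  qed
  have "exp (- t\<^sup>2 / 2) = (\<Prod>k\<in>K. exp (- x k))"
    using x_sum K(1) by (simp add: exp_sum[symmetric] sum_negf)
  then have split: "char (distr M borel (\<lambda>\<omega>. \<Sum>k\<in>K. a k * X k \<omega>)) t - complex_of_real (exp (- t\<^sup>2 / 2))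
      = ((\<Prod>k\<in>K. char (distr M borel (\<lambda>\<omega>. a k * X k \<omega>)) t) - of_real (\<Prod>k\<in>K. 1 - x k))
        + of_real ((\<Prod>k\<in>K. 1 - x k) - (\<Prod>k\<in>K. exp (- x k)))"
    by (simp add: char_weighted_sum[OF K(2)])
  have "cmod (char (distr M borel (\<lambda>\<omega>. \<Sum>k\<in>K. a k * X k \<omega>)) t - complex_of_real (exp (- t\<^sup>2 / 2)))
      \<le> cmod ((\<Prod>k\<in>K. char (distr M borel (\<lambda>\<omega>. a k * X k \<omega>)) t) - of_real (\<Prod>k\<in>K. 1 - x k))
        + \<bar>(\<Prod>k\<in>K. 1 - x k) - (\<Prod>k\<in>K. exp (- x k))\<bar>"
    unfolding split by (rule order_trans[OF norm_triangle_ineq]) (simp only: norm_of_real order_refl)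
  with first second show ?thesis by linarith
qed

theorem weighted_sum_weak_conv_std_normal:
  assumes K: "\<And>n. finite (K n)" "\<And>n. K n \<subseteq> I"
    and sum_sq: "eventually (\<lambda>n. v * (\<Sum>k\<in>K n. (a n k)\<^sup>2) = 1) sequentially"
    and bound: "\<And>n k. k \<in> K n \<Longrightarrow> \<bar>a n k\<bar> \<le> \<delta> n"
    and \<delta>: "\<delta> \<longlonglongrightarrow> 0"
  shows "weak_conv_m (\<lambda>n. distr M borel (\<lambda>\<omega>. \<Sum>k\<in>K n. a n k * X k \<omega>)) std_normal_distribution"
proof (rule levy_continuity)
  fix t
  let ?err = "\<lambda>n. \<bar>t\<bar> ^ 3 * \<bar>\<delta> n\<bar> / 6 + t ^ 4 * \<bar>\<delta> n\<bar>\<^sup>2 / 4"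
  have "eventually (\<lambda>n. \<bar>\<delta> n\<bar> < 1 / (\<bar>t\<bar> + 1)) sequentially"
    using \<delta> by (auto simp: tendsto_iff dist_real_def add_pos_nonneg)
  with sum_sq have "eventually (\<lambda>n. norm (char (distr M borel (\<lambda>\<omega>. \<Sum>k\<in>K n. a n k * X k \<omega>)) t
      - complex_of_real (exp (- t\<^sup>2 / 2))) \<le> ?err n) sequentially"
  proof eventually_elim
    case (elim n)
    have "\<bar>\<delta> n\<bar> * (\<bar>t\<bar> + 1) \<le> 1"
      using elim(2) by (simp add: less_divide_eq add_pos_nonneg add.commute[of _ 1])
    moreover have "\<bar>a n k\<bar> \<le> \<bar>\<delta> n\<bar>" if "k \<in> K n" for k
      using bound[OF that] by linarith
    ultimately show ?case by (intro char_weighted_sum_approx K elim(1))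
  qed
  moreover have "?err \<longlonglongrightarrow> \<bar>t\<bar> ^ 3 * 0 / 6 + t ^ 4 * 0\<^sup>2 / 4"
    using tendsto_rabs_zero[OF \<delta>] by (intro tendsto_intros) auto
  then have "?err \<longlonglongrightarrow> 0" by simp
  ultimately have "(\<lambda>n. char (distr M borel (\<lambda>\<omega>. \<Sum>k\<in>K n. a n k * X k \<omega>)) t
      - complex_of_real (exp (- t\<^sup>2 / 2))) \<longlonglongrightarrow> 0"
    by (rule Lim_null_comparison)
  then show "(\<lambda>n. char (distr M borel (\<lambda>\<omega>. \<Sum>k\<in>K n. a n k * X k \<omega>)) t) \<longlonglongrightarrow> char std_normal_distribution t"
    unfolding char_std_normal_distribution by (rule LIM_zero_cancel)
next
  fix n
  show "real_distribution (distr M borel (\<lambda>\<omega>. \<Sum>k\<in>K n. a n k * X k \<omega>))"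
    using K(2)[of n] by (intro real_distribution_distr borel_measurable_sum borel_measurable_times
      borel_measurable_const measurable_X) auto
qed (rule real_dist_normal_dist)

end

section \<open>Uniform convergence of distribution functions\<close>

lemma exists_quantile_grid:
  fixes \<Phi> :: "real \<Rightarrow> real" and m :: nat
  assumes "mono \<Phi>" "\<And>x. isCont \<Phi> x" "(\<Phi> \<longlongrightarrow> 0) at_bot" "(\<Phi> \<longlongrightarrow> 1) at_top"
  shows "\<exists>xs. \<forall>i\<in>{1..<m}. \<Phi> (xs i) = real i / real m"
proof -
  have "\<exists>x. \<Phi> x = real i / real m" if i: "i \<in> {1..<m}" for i
  proof -
    let ?y = "real i / real m"
    have "0 < ?y" "?y < 1" using i by auto
    have "eventually (\<lambda>x. \<Phi> x < ?y) at_bot" by (rule order_tendstoD(2)[OF assms(3) \<open>0 < ?y\<close>])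
    then obtain x0 where x0: "\<Phi> x0 < ?y" by (auto simp: eventually_at_bot_linorder)
    have "eventually (\<lambda>x. ?y < \<Phi> x) at_top" by (rule order_tendstoD(1)[OF assms(4) \<open>?y < 1\<close>])
    then obtain x1 where x1: "?y < \<Phi> x1" by (auto simp: eventually_at_top_linorder)
    have "x0 \<le> x1"
    proof (rule ccontr)
      assume "\<not> x0 \<le> x1"
      then have "\<Phi> x1 \<le> \<Phi> x0" using monoD[OF assms(1)] by simp
      with x0 x1 show False by simp
    qed
    moreover have "continuous_on {x0..x1} \<Phi>" using assms(2) by (simp add: continuous_at_imp_continuous_on)
    ultimately show ?thesis using IVT'[of \<Phi> x0 ?y x1] x0 x1 by auto
  qed
  then show ?thesis by metis
qed

lemma grid_upper_bound:
  fixes F \<Phi> :: "real \<Rightarrow> real" and m :: nat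
  assumes "mono F" "mono \<Phi>" "\<And>x. F x \<le> 1" "\<And>x. 0 \<le> \<Phi> x" "0 \<le> e" "1 \<le> m"
    and grid: "\<And>i. i \<in> {1..<m} \<Longrightarrow> \<Phi> (xs i) = real i / real m \<and> F (xs i) \<le> \<Phi> (xs i) + e"
  shows "F a \<le> \<Phi> a + 1 / real m + e"
proof -
  define j where "j = nat \<lfloor>real m * \<Phi> a\<rfloor> + 1"
  have m: "0 < real m" using assms(6) by simp
  have j: "real m * \<Phi> a < real j" "real j \<le> real m * \<Phi> a + 1"
    using assms(4)[of a] m by (simp_all add: j_def) linarith+
  show ?thesis
  proof (cases "j < m")
    case True
    then have ji: "j \<in> {1..<m}" by (simp add: j_def)
    have "\<Phi> a < real j / real m" using j(1) m by (simp add: pos_less_divide_eq mult.commute)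
    then have "\<Phi> a < \<Phi> (xs j)" using grid[OF ji] by simp
    have "a \<le> xs j"
    proof (rule ccontr)
      assume "\<not> a \<le> xs j"
      then have "\<Phi> (xs j) \<le> \<Phi> a" using monoD[OF assms(2)] by simp
      with \<open>\<Phi> a < \<Phi> (xs j)\<close> show False by simp
    qed
    then have "F a \<le> F (xs j)" using monoD[OF assms(1)] by simp
    also have "\<dots> \<le> real j / real m + e" using grid[OF ji] by simp
    also have "\<dots> \<le> \<Phi> a + 1 / real m + e"
      using divide_right_mono[OF j(2), of "real m"] m by (simp add: add_divide_distrib)
    finally show ?thesis .
  next
    case False
    then have "1 \<le> \<Phi> a + 1 / real m" using j(2) m by (simp add: field_simps)
    then show ?thesis using assms(3)[of a] assms(5) by linarith
  qed
qed

lemma grid_lower_bound: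
  fixes F \<Phi> :: "real \<Rightarrow> real" and m :: nat
  assumes "mono F" "mono \<Phi>" "\<And>x. 0 \<le> F x" "\<And>x. \<Phi> x \<le> 1" "0 \<le> e" "1 \<le> m"
    and grid: "\<And>i. i \<in> {1..<m} \<Longrightarrow> \<Phi> (xs i) = real i / real m \<and> \<Phi> (xs i) - e \<le> F (xs i)"
  shows "\<Phi> a - 1 / real m - e \<le> F a"
proof -
  \<comment> \<open>reflect \<open>x \<mapsto> - x\<close> and \<open>y \<mapsto> 1 - y\<close>, which turns lower bounds into upper bounds\<close>
  have "1 - F (- (- a)) \<le> (1 - \<Phi> (- (- a))) + 1 / real m + e"
  proof (rule grid_upper_bound[where F = "\<lambda>x. 1 - F (- x)" and \<Phi> = "\<lambda>x. 1 - \<Phi> (- x)"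
        and xs = "\<lambda>i. - xs (m - i)"])
    show "mono (\<lambda>x. 1 - F (- x))" "mono (\<lambda>x. 1 - \<Phi> (- x))"
      using assms(1,2) by (auto simp: mono_def)
    fix i assume i: "i \<in> {1..<m}"
    then have "m - i \<in> {1..<m}" by auto
    then show "1 - \<Phi> (- (- xs (m - i))) = real i / real m
        \<and> 1 - F (- (- xs (m - i))) \<le> 1 - \<Phi> (- (- xs (m - i))) + e"
      using grid[of "m - i"] i assms(6) by (auto simp: of_nat_diff field_simps)
  qed (use assms in auto)
  then show ?thesis by simp
qed

lemma grid_abs_bound:
  fixes F \<Phi> :: "real \<Rightarrow> real" and m :: nat
  assumes "mono F" "mono \<Phi>" "\<And>x. 0 \<le> F x" "\<And>x. F x \<le> 1" "\<And>x. 0 \<le> \<Phi> x" "\<And>x. \<Phi> x \<le> 1"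
    and "0 \<le> e" "1 \<le> m"
    and grid: "\<And>i. i \<in> {1..<m} \<Longrightarrow> \<Phi> (xs i) = real i / real m \<and> \<bar>F (xs i) - \<Phi> (xs i)\<bar> \<le> e"
  shows "\<bar>F a - \<Phi> a\<bar> \<le> 1 / real m + e"
proof -
  have "F a \<le> \<Phi> a + 1 / real m + e"
  proof (rule grid_upper_bound[OF assms(1,2,4,5,7,8)])
    fix i assume "i \<in> {1..<m}"
    then show "\<Phi> (xs i) = real i / real m \<and> F (xs i) \<le> \<Phi> (xs i) + e"
      using grid[of i] by (simp add: abs_le_iff)
  qed
  moreover have "\<Phi> a - 1 / real m - e \<le> F a"
  proof (rule grid_lower_bound[OF assms(1,2,3,6,7,8)])
    fix i assume "i \<in> {1..<m}"
    then show "\<Phi> (xs i) = real i / real m \<and> \<Phi> (xs i) - e \<le> F (xs i)"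
      using grid[of i] by (simp add: abs_le_iff)
  qed
  ultimately show ?thesis unfolding abs_le_iff by (intro conjI; linarith)
qed

theorem mono_pointwise_imp_uniform_convergence:
  fixes F :: "nat \<Rightarrow> real \<Rightarrow> real" and \<Phi> :: "real \<Rightarrow> real"
  assumes F: "\<And>n. mono (F n)" "\<And>n x. 0 \<le> F n x" "\<And>n x. F n x \<le> 1"
    and \<Phi>: "mono \<Phi>" "\<And>x. isCont \<Phi> x" "(\<Phi> \<longlongrightarrow> 0) at_bot" "(\<Phi> \<longlongrightarrow> 1) at_top"
    and conv: "\<And>x. (\<lambda>n. F n x) \<longlonglongrightarrow> \<Phi> x"
  shows "(\<lambda>n. SUP a. \<bar>F n a - \<Phi> a\<bar>) \<longlonglongrightarrow> 0"
  unfolding tendsto_iff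
proof (intro allI impI)
  fix e :: real assume e: "0 < e"
  have \<Phi>_01: "0 \<le> \<Phi> x" "\<Phi> x \<le> 1" for x
    using conv[of x] F(2,3) by (meson LIMSEQ_le_const LIMSEQ_le_const2)+
  obtain m :: nat where m: "4 / e < real m" using reals_Archimedean2 by blast
  moreover have "0 < 4 / e" using e by simp
  ultimately have "0 < real m" by linarith
  then have "1 \<le> m" "1 / real m \<le> e / 4" using m e by (simp_all add: field_simps)
  obtain xs where xs: "\<And>i. i \<in> {1..<m} \<Longrightarrow> \<Phi> (xs i) = real i / real m"
    using exists_quantile_grid[OF \<Phi>] by blast
  have "eventually (\<lambda>n. \<forall>i\<in>{1..<m}. \<bar>F n (xs i) - \<Phi> (xs i)\<bar> \<le> e / 4) sequentially"
  proof (intro eventually_ball_finite ballI)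
    fix i
    show "eventually (\<lambda>n. \<bar>F n (xs i) - \<Phi> (xs i)\<bar> \<le> e / 4) sequentially"
      using tendstoD[OF conv, of "e / 4" "xs i"] e by (auto simp: dist_real_def elim: eventually_mono)
  qed simp
  then show "eventually (\<lambda>n. dist (SUP a. \<bar>F n a - \<Phi> a\<bar>) 0 < e) sequentially"
  proof eventually_elim
    case (elim n)
    have pointwise: "\<bar>F n a - \<Phi> a\<bar> \<le> e / 2" for a
    proof -
      have "\<bar>F n a - \<Phi> a\<bar> \<le> 1 / real m + e / 4"
        using xs elim e \<open>1 \<le> m\<close> by (intro grid_abs_bound[OF F(1) \<Phi>(1) F(2,3) \<Phi>_01, where xs = xs]) auto
      then show ?thesis using \<open>1 / real m \<le> e / 4\<close> by linarith
    qed
    then have "(SUP a. \<bar>F n a - \<Phi> a\<bar>) \<le> e / 2" by (intro cSUP_least) auto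
    moreover have "bdd_above (range (\<lambda>a. \<bar>F n a - \<Phi> a\<bar>))"
      by (rule bdd_aboveI2[where M = "e / 2"]) (rule pointwise)
    then have "0 \<le> (SUP a. \<bar>F n a - \<Phi> a\<bar>)"
      by (rule cSUP_upper2[OF _ UNIV_I]) simp
    ultimately show ?case using e by (simp add: dist_real_def)
  qed
qed

lemma cdf_std_normal_eq_integral:
  "cdf std_normal_distribution a = (LBINT t:{..a}. exp (- (t\<^sup>2) / 2) / sqrt (2 * pi))"
proof -
  have "cdf std_normal_distribution a = integral\<^sup>L std_normal_distribution (indicator {..a})"
    by (simp add: cdf_def)
  also have "\<dots> = integral\<^sup>L lborel (\<lambda>x. std_normal_density x *\<^sub>R indicator {..a} x)"
    by (rule integral_density) auto
  also have "\<dots> = (LBINT t:{..a}. exp (- (t\<^sup>2) / 2) / sqrt (2 * pi))"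
    unfolding set_lebesgue_integral_def
    by (rule Bochner_Integration.integral_cong[OF refl]) (simp add: std_normal_density_def mult_ac)
  finally show ?thesis .
qed

lemma isCont_cdf_std_normal: "isCont (cdf std_normal_distribution) x"
proof -
  interpret real_distribution std_normal_distribution by (rule real_dist_normal_dist)
  have "emeasure std_normal_distribution {x} = (\<integral>\<^sup>+ y. ennreal (std_normal_density y) * indicator {x} y \<partial>lborel)"
    by (rule emeasure_density) auto
  also have "\<dots> = 0" by (rule nn_integral_null_set) (auto simp: null_sets_def)
  finally show ?thesis by (simp add: isCont_cdf measure_def)
qed

theorem weak_conv_std_normal_imp_uniform_cdf:
  assumes "\<And>n. real_distribution (\<mu> n)" "weak_conv_m \<mu> std_normal_distribution"
  shows "(\<lambda>n. SUP a. \<bar>cdf (\<mu> n) a - cdf std_normal_distribution a\<bar>) \<longlonglongrightarrow> 0"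
proof (rule mono_pointwise_imp_uniform_convergence)
  interpret N: real_distribution std_normal_distribution by (rule real_dist_normal_dist)
  show "mono (cdf std_normal_distribution)" by (intro monoI N.cdf_nondecreasing)
  show "(cdf std_normal_distribution \<longlongrightarrow> 0) at_bot" by (rule N.cdf_lim_at_bot)
  show "(cdf std_normal_distribution \<longlongrightarrow> 1) at_top" by (rule N.cdf_lim_at_top_prob)
  fix n
  interpret real_distribution "\<mu> n" by (rule assms(1))
  show "mono (cdf (\<mu> n))" by (intro monoI cdf_nondecreasing)
  show "0 \<le> cdf (\<mu> n) x" "cdf (\<mu> n) x \<le> 1" for x by (rule cdf_nonneg, rule cdf_bounded_prob)
next
  show "(\<lambda>n. cdf (\<mu> n) x) \<longlonglongrightarrow> cdf std_normal_distribution x" for x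
    using assms(2) isCont_cdf_std_normal unfolding weak_conv_m_def weak_conv_def by blast
qed (rule isCont_cdf_std_normal)

section \<open>Distances in the pentagonal chain\<close>

lemma relpow_sym: "sym R \<Longrightarrow> (x, y) \<in> R ^^ k \<Longrightarrow> (y, x) \<in> R ^^ k"
proof (induction k arbitrary: y)
  case (Suc k)
  then obtain z where "(x, z) \<in> R ^^ k" "(z, y) \<in> R" by auto
  with Suc show ?case by (meson relpow_Suc_I2 symD)
qed simp

definition pent_dist :: "nat \<Rightarrow> nat \<Rightarrow> nat" where
  "pent_dist j j' = (let d = (if j \<le> j' then j' - j else j - j') in min d (5 - d))"

lemma less_5_cases: "(j::nat) < 5 \<Longrightarrow> j = 0 \<or> j = 1 \<or> j = 2 \<or> j = 3 \<or> j = 4"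
  by auto

lemma pent_dist_sym: "pent_dist j j' = pent_dist j' j"
  by (simp add: pent_dist_def Let_def)

lemma pent_dist_self [simp]: "pent_dist j j = 0"
  by (simp add: pent_dist_def)

lemma pent_dist_triangle:
  "j < 5 \<Longrightarrow> j' < 5 \<Longrightarrow> j'' < 5 \<Longrightarrow> pent_dist j j'' \<le> pent_dist j j' + pent_dist j' j''"
  by (elim less_5_cases[elim_format] disjE) (simp_all add: pent_dist_def)

lemma pent_adjacent_iff:
  "j < 5 \<Longrightarrow> j' < 5 \<Longrightarrow> (j' = (j + 1) mod 5 \<or> j = (j' + 1) mod 5) \<longleftrightarrow> pent_dist j j' = 1"
  by (elim less_5_cases[elim_format] disjE) (simp_all add: pent_dist_def)

lemma pg_edges_sym: "(v, w) \<in> pg_edges u n \<Longrightarrow> (w, v) \<in> pg_edges u n"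
  unfolding pg_edges_def by auto

lemma pg_edge_cycle:
  "1 \<le> i \<Longrightarrow> i \<le> n \<Longrightarrow> j < 5 \<Longrightarrow> j' < 5 \<Longrightarrow> pent_dist j j' = 1 \<Longrightarrow> ((i, j), (i, j')) \<in> pg_edges u n"
  using pent_adjacent_iff[of j j'] unfolding pg_edges_def by auto

lemma pg_edge_link: "1 \<le> i \<Longrightarrow> i < n \<Longrightarrow> ((i, u i), (Suc i, 0)) \<in> pg_edges u n"
  unfolding pg_edges_def by auto

lemma pg_edgesE:
  assumes "(v, w) \<in> pg_edges u n"
  obtains (cycle) i j j' where "v = (i, j)" "w = (i, j')" "1 \<le> i" "i \<le> n" "j < 5" "j' < 5" "pent_dist j j' = 1"
    | (link) i where "1 \<le> i" "i < n" "{v, w} = {(i, u i), (Suc i, 0)}"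
proof -
  obtain i j i' j' where vw: "v = (i, j)" "w = (i', j')" by (cases v, cases w)
  from assms consider "1 \<le> i" "i \<le> n" "i' = i" "j < 5" "j' < 5" "j' = (j + 1) mod 5 \<or> j = (j' + 1) mod 5"
    | "1 \<le> i" "i < n" "j = u i" "i' = Suc i" "j' = 0"
    | "1 \<le> i'" "i' < n" "j' = u i'" "i = Suc i'" "j = 0"
    unfolding pg_edges_def vw by auto
  then show thesis
  proof cases
    case 1
    then show thesis using cycle[of i j j'] pent_adjacent_iff vw by blast
  next
    case 2
    then show thesis using link[of i] vw by auto
  next
    case 3
    then show thesis using link[of i'] vw by auto
  qed
qed

lemma pent_walk:
  assumes "1 \<le> i" "i \<le> n" "j < 5" "j' < 5"
  shows "((i, j), (i, j')) \<in> pg_edges u n ^^ pent_dist j j'"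
proof -
  have step: "((i, x), (i, y)) \<in> pg_edges u n ^^ 1" if "x < 5" "y < 5" "pent_dist x y = 1" for x y
    using pg_edge_cycle assms that by simp
  have two_steps: "((i, j), (i, j')) \<in> pg_edges u n ^^ 2"
    if "x < 5" "pent_dist j x = 1" "pent_dist x j' = 1" for x
    using relpow_trans[OF step[OF assms(3) that(1,2)] step[OF that(1) assms(4) that(3)]]
    unfolding one_add_one .
  consider "j' = j" | "pent_dist j j' = 1"
    | "pent_dist j j' = 2" "pent_dist j ((j + 1) mod 5) = 1" "pent_dist ((j + 1) mod 5) j' = 1"
    | "pent_dist j j' = 2" "pent_dist j ((j + 4) mod 5) = 1" "pent_dist ((j + 4) mod 5) j' = 1"
    using assms(3,4) by (elim less_5_cases[elim_format] disjE) (simp_all add: pent_dist_def Let_def)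
  then show ?thesis
  proof cases
    case 3
    then show ?thesis using two_steps[of "(j + 1) mod 5"] by simp
  next
    case 4
    then show ?thesis using two_steps[of "(j + 4) mod 5"] by simp
  qed (use step assms in auto)
qed

definition admissible :: "(nat \<Rightarrow> nat) \<Rightarrow> nat \<Rightarrow> bool" where
  "admissible u n \<longleftrightarrow> (\<forall>i. 1 \<le> i \<and> i < n \<longrightarrow> u i < 5)"

text \<open>Length of the path from \<open>(i, j)\<close> to \<open>(i', j')\<close>, \<open>i < i'\<close>, that leaves each pentagon
  \<open>k\<close> through \<open>u k\<close> and enters the next one through \<open>x\<^sub>1 = (k + 1, 0)\<close>.\<close>
definition cross_dist :: "(nat \<Rightarrow> nat) \<Rightarrow> nat \<Rightarrow> nat \<Rightarrow> nat \<Rightarrow> nat \<Rightarrow> nat" where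
  "cross_dist u i j i' j' =
     pent_dist j (u i) + (\<Sum>k\<in>{Suc i..<i'}. pent_dist 0 (u k) + 1) + 1 + pent_dist 0 j'"

fun chain_dist :: "(nat \<Rightarrow> nat) \<Rightarrow> nat \<times> nat \<Rightarrow> nat \<times> nat \<Rightarrow> nat" where
  "chain_dist u (i, j) (i', j') =
     (if i = i' then pent_dist j j'
      else if i < i' then cross_dist u i j i' j' else cross_dist u i' j' i j)"

lemma chain_dist_self [simp]: "chain_dist u v v = 0"
  by (cases v) auto

lemma chain_dist_sym: "chain_dist u v w = chain_dist u w v"
  by (cases v, cases w) (auto simp: pent_dist_sym)

lemma cross_dist_Suc:
  "cross_dist u i j (Suc i) j' = pent_dist j (u i) + 1 + pent_dist 0 j'"
  by (simp add: cross_dist_def)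

lemma cross_dist_Suc_right:
  "i < i' \<Longrightarrow> cross_dist u i j (Suc i') j' = cross_dist u i j i' (u i') + 1 + pent_dist 0 j'"
  by (simp add: cross_dist_def sum.atLeastLessThan_Suc)

lemma cross_dist_Suc_left:
  "Suc i < i' \<Longrightarrow> cross_dist u i (u i) i' j' = cross_dist u (Suc i) 0 i' j' + 1"
  by (simp add: cross_dist_def sum.atLeast_Suc_lessThan)

lemma cross_walk:
  assumes u: "admissible u n" and "1 \<le> i" "i < i'" "i' \<le> n" "j < 5" "j' < 5"
  shows "((i, j), (i', j')) \<in> pg_edges u n ^^ cross_dist u i j i' j'"
  using assms(3-6)
proof (induction i' arbitrary: j' rule: less_induct)
  case (less i')
  then obtain m where m: "i' = Suc m" "i \<le> m" by (cases i') auto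
  have "u m < 5" using u m less.prems assms(2) by (auto simp: admissible_def)
  have link: "((m, u m), (Suc m, 0)) \<in> pg_edges u n ^^ 1"
    using pg_edge_link[of m n u] assms(2) less.prems m by simp
  have enter: "((Suc m, 0), (Suc m, j')) \<in> pg_edges u n ^^ pent_dist 0 j'"
    using pent_walk[of "Suc m" n 0 j'] less.prems m by simp
  have leave: "((i, j), (m, u m)) \<in> pg_edges u n ^^
      (if i = m then pent_dist j (u i) else cross_dist u i j m (u m))"
    using pent_walk[of i n j "u m"] less.IH[of m "u m"] assms(2) less.prems m \<open>u m < 5\<close> by auto
  show ?case
    using relpow_trans[OF relpow_trans[OF leave link] enter] m
    by (cases "i = m") (simp_all add: cross_dist_Suc cross_dist_Suc_right)
qed

lemma chain_walk:
  assumes "admissible u n" "v \<in> pg_verts n" "w \<in> pg_verts n"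
  shows "(v, w) \<in> pg_edges u n ^^ chain_dist u v w"
proof -
  obtain i j i' j' where vw: "v = (i, j)" "w = (i', j')" by (cases v, cases w)
  have sym: "sym (pg_edges u n)" by (auto intro: symI pg_edges_sym)
  consider "i = i'" | "i < i'" | "i' < i" by linarith
  then show ?thesis
    using assms pent_walk cross_walk relpow_sym[OF sym] unfolding vw by cases (auto simp: pg_verts_def)
qed

lemma chain_dist_edge:
  assumes u: "admissible u n" and v: "v \<in> pg_verts n" and e: "(w', w) \<in> pg_edges u n"
  shows "chain_dist u v w \<le> chain_dist u v w' + 1"
proof -
  obtain a b where vab: "v = (a, b)" by (cases v)
  have b: "b < 5" "a \<le> n" using v by (auto simp: vab pg_verts_def)
  from e show ?thesis
  proof (cases rule: pg_edgesE)
    case (cycle i j j')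
    consider "a = i" | "a < i" | "i < a" by linarith
    then show ?thesis
    proof cases
      case 3
      then have "u i < 5" using u cycle b by (auto simp: admissible_def)
      then show ?thesis
        using 3 cycle pent_dist_triangle[of j' j "u i"] by (simp add: vab cross_dist_def pent_dist_sym)
    qed (use cycle b pent_dist_triangle[of b j j'] pent_dist_triangle[of 0 j j'] in
          \<open>simp_all add: vab cross_dist_def\<close>)
  next
    case (link i)
    consider "a < i" | "a = i" | "a = Suc i" | "Suc i < a" by linarith
    then have "chain_dist u v (Suc i, 0) = chain_dist u v (i, u i) + 1
             \<or> chain_dist u v (i, u i) = chain_dist u v (Suc i, 0) + 1"
      by cases (simp_all add: vab cross_dist_Suc cross_dist_Suc_right cross_dist_Suc_left pent_dist_sym)
    with link show ?thesis by (auto simp: doubleton_eq_iff)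
  qed
qed

lemma pg_dist_eq_chain_dist:
  assumes "admissible u n" "v \<in> pg_verts n" "w \<in> pg_verts n"
  shows "pg_dist u n v w = chain_dist u v w"
  unfolding pg_dist_def
proof (rule Least_equality)
  show "(v, w) \<in> pg_edges u n ^^ chain_dist u v w" using chain_walk assms by blast
  show "chain_dist u v w \<le> k" if "(v, w) \<in> pg_edges u n ^^ k" for k
    using that
  proof (induction k arbitrary: w)
    case (Suc k)
    then obtain w' where "(v, w') \<in> pg_edges u n ^^ k" "(w', w) \<in> pg_edges u n" by auto
    with Suc.IH chain_dist_edge[OF assms(1,2)] show ?case by fastforce
  qed simp
qed

section \<open>The Gutman index is affine in the attachment choices\<close>

lemma pg_neighbours:
  assumes "(i, j) \<in> pg_verts n"
  shows "{w. ((i, j), w) \<in> pg_edges u n} = {(i, (j + 1) mod 5), (i, (j + 4) mod 5)}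
     \<union> (if i < n \<and> j = u i then {(Suc i, 0)} else {})
     \<union> (if 1 < i \<and> j = 0 then {(i - 1, u (i - 1))} else {})"
proof -
  have ij: "1 \<le> i" "i \<le> n" "j < 5" using assms by (auto simp: pg_verts_def)
  have adj: "j' < 5 \<Longrightarrow> (j' = (j + 1) mod 5 \<or> j = (j' + 1) mod 5) \<longleftrightarrow> (j' = (j + 1) mod 5 \<or> j' = (j + 4) mod 5)"
    for j' using ij(3) by (elim less_5_cases[elim_format] disjE) auto
  show ?thesis
  proof (intro set_eqI iffI)
    fix w assume w: "w \<in> {w. ((i, j), w) \<in> pg_edges u n}"
    obtain i' j' where "w = (i', j')" by (cases w)
    then show "w \<in> {(i, (j + 1) mod 5), (i, (j + 4) mod 5)}
     \<union> (if i < n \<and> j = u i then {(Suc i, 0)} else {}) \<union> (if 1 < i \<and> j = 0 then {(i - 1, u (i - 1))} else {})"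
      using w adj[of j'] ij unfolding pg_edges_def \<open>w = (i', j')\<close> by auto
  next
    fix w assume "w \<in> {(i, (j + 1) mod 5), (i, (j + 4) mod 5)}
     \<union> (if i < n \<and> j = u i then {(Suc i, 0)} else {}) \<union> (if 1 < i \<and> j = 0 then {(i - 1, u (i - 1))} else {})"
    then show "w \<in> {w. ((i, j), w) \<in> pg_edges u n}"
      unfolding pg_edges_def using adj[of "(j + 1) mod 5"] adj[of "(j + 4) mod 5"] ij
      by (auto split: if_splits)
  qed
qed

definition chain_deg :: "(nat \<Rightarrow> nat) \<Rightarrow> nat \<Rightarrow> nat \<Rightarrow> nat \<Rightarrow> real" where
  "chain_deg u n i j = 2 + (if i < n \<and> j = u i then 1 else 0) + (if 1 < i \<and> j = 0 then 1 else 0)"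

lemma pg_deg_eq_chain_deg:
  assumes "(i, j) \<in> pg_verts n"
  shows "real (pg_deg u n (i, j)) = chain_deg u n i j"
proof -
  have "j < 5" using assms by (simp add: pg_verts_def)
  then have "(j + 1) mod 5 \<noteq> (j + 4) mod 5" by (elim less_5_cases[elim_format] disjE) auto
  then show ?thesis
    unfolding pg_deg_def pg_neighbours[OF assms] chain_deg_def by (auto simp: card_insert_if)
qed

definition pair_gut :: "(nat \<Rightarrow> nat) \<Rightarrow> nat \<Rightarrow> nat \<Rightarrow> nat \<Rightarrow> real" where
  "pair_gut u n i i' =
     (\<Sum>j<5. \<Sum>j'<5. chain_deg u n i j * chain_deg u n i' j' * real (chain_dist u (i, j) (i', j')))"

lemma pair_gut_sym: "pair_gut u n i i' = pair_gut u n i' i"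
  unfolding pair_gut_def by (subst sum.swap) (simp add: chain_dist_sym mult_ac)

lemma gut_eq_sum_pair_gut:
  assumes u: "admissible u n"
  shows "gut u n = (\<Sum>i\<in>{1..n}. \<Sum>i'\<in>{1..n}. pair_gut u n i i') / 2"
proof -
  let ?V = "pg_verts n"
  let ?f = "\<lambda>v w. real (pg_deg u n v * pg_deg u n w * pg_dist u n v w)"
  let ?g = "\<lambda>v w. chain_deg u n (fst v) (snd v) * chain_deg u n (fst w) (snd w) * real (chain_dist u v w)"
  have "(\<Sum>w\<in>?V - {v}. ?f v w) = (\<Sum>w\<in>?V. ?g v w)" if v: "v \<in> ?V" for v
  proof -
    have "?f v w = ?g v w" if "w \<in> ?V" for w
      using pg_dist_eq_chain_dist[OF u v that] pg_deg_eq_chain_deg[of "fst v" "snd v" n u]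
        pg_deg_eq_chain_deg[of "fst w" "snd w" n u] v that by simp
    moreover have "finite ?V" by (simp add: pg_verts_def)
    ultimately show ?thesis using v by (simp add: sum.remove[of ?V v])
  qed
  then have "(\<Sum>v\<in>?V. \<Sum>w\<in>?V - {v}. ?f v w) = (\<Sum>v\<in>?V. \<Sum>w\<in>?V. ?g v w)"
    by (rule sum.cong[OF refl])
  also have "\<dots> = (\<Sum>i\<in>{1..n}. \<Sum>j<5. \<Sum>i'\<in>{1..n}. \<Sum>j'<5.
      chain_deg u n i j * chain_deg u n i' j' * real (chain_dist u (i, j) (i', j')))"
    unfolding pg_verts_def sum.cartesian_product' by simp
  also have "\<dots> = (\<Sum>i\<in>{1..n}. \<Sum>i'\<in>{1..n}. pair_gut u n i i')"
    unfolding pair_gut_def by (rule sum.cong[OF refl], rule sum.swap)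
  finally show ?thesis unfolding gut_def by simp
qed

lemma admissible_less_5: "admissible u n \<Longrightarrow> 1 \<le> i \<Longrightarrow> i < n \<Longrightarrow> u i < 5"
  by (simp add: admissible_def)

definition pent_weight :: "nat \<Rightarrow> nat \<Rightarrow> real" where
  "pent_weight n i = 10 + (if i < n then 1 else 0) + (if 1 < i then 1 else 0)"

lemma sum_chain_deg:
  assumes "admissible u n" "1 \<le> i" "i \<le> n"
  shows "(\<Sum>j<5. chain_deg u n i j) = pent_weight n i"
proof (cases "i < n")
  case True
  with assms have "u i < 5" by (simp add: admissible_less_5)
  then show ?thesis
    using True by (elim less_5_cases[elim_format] disjE) (auto simp: sum_lessThan_5 chain_deg_def pent_weight_def)
qed (use assms in \<open>simp add: sum_lessThan_5 chain_deg_def pent_weight_def\<close>)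

lemma sum_chain_deg_exit:
  assumes "admissible u n" "1 \<le> i" "i < n"
  shows "(\<Sum>j<5. chain_deg u n i j * pent_dist j (u i)) = 12 + (if 1 < i then real (pent_dist 0 (u i)) else 0)"
proof -
  have "u i < 5" using assms by (simp add: admissible_less_5)
  then show ?thesis
    using assms(3) by (elim less_5_cases[elim_format] disjE) (auto simp: sum_lessThan_5 chain_deg_def pent_dist_def)
qed

lemma sum_chain_deg_entry:
  assumes "admissible u n" "1 \<le> i" "i \<le> n"
  shows "(\<Sum>j<5. chain_deg u n i j * pent_dist 0 j) = 12 + (if i < n then real (pent_dist 0 (u i)) else 0)"
proof (cases "i < n")
  case True
  with assms have "u i < 5" by (simp add: admissible_less_5)
  then show ?thesis
    using True by (elim less_5_cases[elim_format] disjE) (auto simp: sum_lessThan_5 chain_deg_def pent_dist_def)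
qed (use assms in \<open>simp add: sum_lessThan_5 chain_deg_def pent_dist_def\<close>)

lemma pair_gut_diag:
  assumes "admissible u n" "1 \<le> i" "i \<le> n"
  shows "pair_gut u n i i = 120 + (if i < n then 24 else 0) + (if 1 < i then 24 else 0)
      + (if 1 < i \<and> i < n then 2 * real (pent_dist 0 (u i)) else 0)"
proof (cases "i < n")
  case True
  with assms have "u i < 5" by (simp add: admissible_less_5)
  then show ?thesis
    using True by (elim less_5_cases[elim_format] disjE) (auto simp: pair_gut_def sum_lessThan_5 chain_deg_def pent_dist_def)
qed (use assms in \<open>simp add: pair_gut_def sum_lessThan_5 chain_deg_def pent_dist_def\<close>)

lemma pair_gut_less:
  assumes u: "admissible u n" and "1 \<le> i" "i < i'" "i' \<le> n"
  shows "pair_gut u n i i' =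
      (12 + (if 1 < i then real (pent_dist 0 (u i)) else 0)) * pent_weight n i'
    + pent_weight n i * pent_weight n i' * ((\<Sum>k\<in>{Suc i..<i'}. real (pent_dist 0 (u k)) + 1) + 1)
    + pent_weight n i * (12 + (if i' < n then real (pent_dist 0 (u i')) else 0))"
proof -
  have "pair_gut u n i i' = (\<Sum>j<5. \<Sum>j'<5. chain_deg u n i j * chain_deg u n i' j' *
      (real (pent_dist j (u i)) + ((\<Sum>k\<in>{Suc i..<i'}. real (pent_dist 0 (u k)) + 1) + 1) + real (pent_dist 0 j')))"
    (is "_ = ?expanded")
    unfolding pair_gut_def using assms(3) by (simp add: cross_dist_def algebra_simps)
  have "1 \<le> i'" "i \<le> n" "i < n" using assms by auto
  note sums = sum_chain_deg[OF u \<open>1 \<le> i\<close> \<open>i \<le> n\<close>] sum_chain_deg[OF u \<open>1 \<le> i'\<close> \<open>i' \<le> n\<close>]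
    sum_chain_deg_exit[OF u \<open>1 \<le> i\<close> \<open>i < n\<close>] sum_chain_deg_entry[OF u \<open>1 \<le> i'\<close> \<open>i' \<le> n\<close>]
  show ?thesis
    unfolding \<open>pair_gut u n i i' = ?expanded\<close> sum_sum_mult_add3 sums by (simp add: algebra_simps)
qed

lemma sum_pent_weight_after:
  assumes "1 \<le> k" "k \<le> n"
  shows "(\<Sum>i\<in>{Suc k..n}. pent_weight n i) = (if k < n then 12 * (real n - real k) - 1 else 0)"
proof (cases "k < n")
  case True
  have "(\<Sum>i\<in>{Suc k..<n}. pent_weight n i) = (\<Sum>i\<in>{Suc k..<n}. 12)"
    using assms by (intro sum.cong) (auto simp: pent_weight_def)
  moreover have "{Suc k..n} = insert n {Suc k..<n}" using True by auto
  ultimately show ?thesis using True assms by (simp add: pent_weight_def of_nat_diff)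
qed (use assms in simp)

lemma sum_pent_weight_before:
  assumes "1 \<le> k" "k \<le> n"
  shows "(\<Sum>i\<in>{1..<k}. pent_weight n i) = (if 1 < k then 12 * (real k - 1) - 1 else 0)"
proof (cases "1 < k")
  case True
  have "(\<Sum>i\<in>{2..<k}. pent_weight n i) = (\<Sum>i\<in>{2..<k}. 12)"
    using assms by (intro sum.cong) (auto simp: pent_weight_def)
  moreover have "{1..<k} = insert 1 {2..<k}" using True by auto
  ultimately show ?thesis using True assms by (simp add: pent_weight_def of_nat_diff)
qed (use assms in simp)

lemma sum_upper_triangle_rearrange:
  fixes d W :: "nat \<Rightarrow> real" and n :: nat
  defines "A k \<equiv> \<Sum>i'\<in>{Suc k..n}. W i'" and "B k \<equiv> \<Sum>i\<in>{1..<k}. W i"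
  shows "(\<Sum>i\<in>{1..n}. \<Sum>i'\<in>{Suc i..n}. (if 1 < i then d i * W i' else 0)
            + W i * W i' * (\<Sum>k\<in>{Suc i..<i'}. d k) + (if i' < n then W i * d i' else 0))
       = (\<Sum>k\<in>{1..n}. d k * ((if 1 < k then A k else 0) + B k * A k + (if k < n then B k else 0)))"
proof -
  have first: "(\<Sum>i\<in>{1..n}. \<Sum>i'\<in>{Suc i..n}. if 1 < i then d i * W i' else 0)
      = (\<Sum>k\<in>{1..n}. d k * (if 1 < k then A k else 0))"
    unfolding A_def by (intro sum.cong refl) (simp add: sum_distrib_left)
  have "(\<Sum>i\<in>{1..n}. \<Sum>i'\<in>{Suc i..n}. W i * W i' * (\<Sum>k\<in>{Suc i..<i'}. d k))
      = (\<Sum>i\<in>{1..n}. \<Sum>k\<in>{Suc i..n}. \<Sum>i'\<in>{Suc k..n}. W i * W i' * d k)"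
    by (simp add: sum_distrib_left sum_triangle_swap)
  also have "\<dots> = (\<Sum>k\<in>{1..n}. \<Sum>i\<in>{1..<k}. \<Sum>i'\<in>{Suc k..n}. W i * W i' * d k)"
    by (rule sum_triangle_swap)
  finally have middle: "(\<Sum>i\<in>{1..n}. \<Sum>i'\<in>{Suc i..n}. W i * W i' * (\<Sum>k\<in>{Suc i..<i'}. d k))
      = (\<Sum>k\<in>{1..n}. d k * (B k * A k))"
    unfolding A_def B_def by (simp add: sum_distrib_left sum_distrib_right mult_ac)
  have "(\<Sum>i\<in>{1..n}. \<Sum>i'\<in>{Suc i..n}. if i' < n then W i * d i' else 0)
      = (\<Sum>k\<in>{1..n}. \<Sum>i\<in>{1..<k}. if k < n then W i * d k else 0)"
    by (rule sum_triangle_swap)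
  also have "\<dots> = (\<Sum>k\<in>{1..n}. d k * (if k < n then B k else 0))"
    unfolding B_def by (intro sum.cong refl) (simp add: sum_distrib_left mult.commute)
  finally have last: "(\<Sum>i\<in>{1..n}. \<Sum>i'\<in>{Suc i..n}. if i' < n then W i * d i' else 0)
      = (\<Sum>k\<in>{1..n}. d k * (if k < n then B k else 0))" .
  show ?thesis
    by (simp only: sum.distrib first middle last distrib_left)
qed

lemma gut_eq_pair_gut_triangle:
  assumes "admissible u n"
  shows "2 * gut u n = (\<Sum>i\<in>{1..n}. pair_gut u n i i) + 2 * (\<Sum>i\<in>{1..n}. \<Sum>i'\<in>{Suc i..n}. pair_gut u n i i')"
proof -
  have "{i' \<in> {1..n}. i < i'} = {Suc i..n}" for i by auto
  then show ?thesis
    using gut_eq_sum_pair_gut[OF assms] sum_symmetric_square[of "{1..n}" "pair_gut u n"] pair_gut_sym by simp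
qed

definition gut_coeff :: "nat \<Rightarrow> nat \<Rightarrow> real" where
  "gut_coeff n k = 144 * (real k - 1) * (real n - real k)"

theorem gut_affine:
  assumes u: "admissible u n"
  shows "gut u n = gut (\<lambda>_. 0) n + (\<Sum>k\<in>{2..<n}. gut_coeff n k * real (pent_dist 0 (u k)))"
proof -
  define d where "d k = real (pent_dist 0 (u k))" for k
  define W where "W = pent_weight n"
  have u0: "admissible (\<lambda>_. 0) n" by (simp add: admissible_def)
  have diag: "pair_gut u n i i = pair_gut (\<lambda>_. 0) n i i + (if 1 < i \<and> i < n then 2 * d i else 0)"
    if "i \<in> {1..n}" for i
    using that pair_gut_diag[OF u, of i] pair_gut_diag[OF u0, of i] by (simp add: d_def)
  have off: "pair_gut u n i i' = pair_gut (\<lambda>_. 0) n i i' + ((if 1 < i then d i * W i' else 0)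
      + W i * W i' * (\<Sum>k\<in>{Suc i..<i'}. d k) + (if i' < n then W i * d i' else 0))"
    if "i \<in> {1..n}" "i' \<in> {Suc i..n}" for i i'
  proof -
    have range: "1 \<le> i" "i < i'" "i' \<le> n" using that by auto
    show ?thesis
      unfolding pair_gut_less[OF u range] pair_gut_less[OF u0 range]
      by (simp add: d_def W_def sum.distrib algebra_simps)
  qed
  have "2 * gut u n - 2 * gut (\<lambda>_. 0) n = (\<Sum>i\<in>{1..n}. if 1 < i \<and> i < n then 2 * d i else 0)
      + 2 * (\<Sum>i\<in>{1..n}. \<Sum>i'\<in>{Suc i..n}. (if 1 < i then d i * W i' else 0)
             + W i * W i' * (\<Sum>k\<in>{Suc i..<i'}. d k) + (if i' < n then W i * d i' else 0))"
    unfolding gut_eq_pair_gut_triangle[OF u] gut_eq_pair_gut_triangle[OF u0] by (simp add: diag off sum.distrib algebra_simps)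
  also have "\<dots> = (\<Sum>k\<in>{1..n}. (if 1 < k \<and> k < n then 2 * d k else 0)
      + 2 * (d k * ((if 1 < k then sum W {Suc k..n} else 0)
                    + sum W {1..<k} * sum W {Suc k..n} + (if k < n then sum W {1..<k} else 0))))"
    unfolding sum_upper_triangle_rearrange by (simp only: sum_distrib_left[of 2] sum.distrib)
  also have "\<dots> = (\<Sum>k\<in>{1..n}. 2 * gut_coeff n k * d k)"
    \<comment> \<open>for \<open>1 < k < n\<close> the bracket is \<open>(1 + sum W {Suc k..n}) (1 + sum W {1..<k}) = 12 (n - k) 12 (k - 1)\<close>\<close>
    unfolding W_def using sum_pent_weight_after sum_pent_weight_before
    by (intro sum.cong refl) (auto simp: gut_coeff_def algebra_simps)
  also have "\<dots> = 2 * (\<Sum>k\<in>{2..<n}. gut_coeff n k * d k)"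
    by (subst sum.mono_neutral_right[of "{1..n}" "{2..<n}"]) (auto simp: gut_coeff_def sum_distrib_left mult.assoc)
  finally show ?thesis by (simp add: d_def)
qed

lemma abs_gut_coeff_le:
  assumes "k \<in> {2..<n}"
  shows "\<bar>gut_coeff n k\<bar> \<le> 144 * (real n)\<^sup>2"
proof -
  have "(real k - 1) * (real n - real k) \<le> real n * real n"
    using assms by (intro mult_mono) auto
  moreover have "0 \<le> (real k - 1) * (real n - real k)" using assms by simp
  ultimately show ?thesis
    by (simp only: gut_coeff_def mult.assoc abs_mult abs_numeral abs_of_nonneg power2_eq_square)
qed

lemma sum_sq_mult_sq_diff:
  "(\<Sum>k=1..n. (real k - 1)\<^sup>2 * (x - real k)\<^sup>2) = real n * (real n - 1) *
     (5 * (2 * real n - 1) * (x - 1)\<^sup>2 - 15 * real n * (real n - 1) * (x - 1)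
      + (2 * real n - 1) * (3 * (real n)\<^sup>2 - 3 * real n - 1)) / 30"
  by (induction n) (simp_all add: power2_eq_square field_simps)

lemma sum_gut_coeff_sq:
  assumes "1 \<le> n"
  shows "(\<Sum>k\<in>{2..<n}. (gut_coeff n k)\<^sup>2) = 144\<^sup>2 * ((real n - 1) ^ 5 - (real n - 1)) / 30"
proof -
  have "(gut_coeff n k)\<^sup>2 = 144\<^sup>2 * ((real k - 1)\<^sup>2 * (real n - real k)\<^sup>2)" for k
    by (simp add: gut_coeff_def power2_eq_square algebra_simps)
  then have "(\<Sum>k\<in>{2..<n}. (gut_coeff n k)\<^sup>2) = (\<Sum>k=1..n. 144\<^sup>2 * ((real k - 1)\<^sup>2 * (real n - real k)\<^sup>2))"
    by (intro sum.mono_neutral_cong_left) auto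
  also have "\<dots> = 144\<^sup>2 * ((real n - 1) ^ 5 - (real n - 1)) / 30"
    unfolding sum_distrib_left[symmetric] sum_sq_mult_sq_diff
    by (simp add: eval_nat_numeral field_simps)
  finally show ?thesis .
qed

section \<open>The random pentagonal chain\<close>

locale random_pentagonal_chain = prob_space +
  fixes c :: "nat \<Rightarrow> 'a \<Rightarrow> nat" and p :: real
  assumes measurable_c: "\<And>n. c n \<in> measurable M (count_space UNIV)"
    and c_1: "\<And>\<omega>. \<omega> \<in> space M \<Longrightarrow> c 1 \<omega> < 5"
    and c_ge_2: "\<And>n \<omega>. n \<ge> 2 \<Longrightarrow> \<omega> \<in> space M \<Longrightarrow> c n \<omega> \<in> {1, 2, 3, 4}"
    and indep: "indep_vars (\<lambda>_. count_space UNIV) (\<lambda>n \<omega>. c n \<omega> \<in> {1, 4}) {2..}"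
    and prob: "\<And>n. n \<ge> 2 \<Longrightarrow> measure M {\<omega> \<in> space M. c n \<omega> \<in> {1, 4}} = p"
    and p_pos: "0 < p" and p_less_1: "p < 1"
begin

declare measurable_c [measurable]

abbreviation gut_rv :: "nat \<Rightarrow> 'a \<Rightarrow> real" where
  "gut_rv n \<omega> \<equiv> gut (\<lambda>i. c i \<omega>) n"

text \<open>\<open>Z\<^sub>k\<^sup>1 - p\<^sub>1\<close>: the attachment vertex \<open>u\<^sub>k\<close> is adjacent to \<open>x\<^sub>1\<close> iff \<open>c k \<in> {1, 4}\<close>.\<close>
definition Y :: "nat \<Rightarrow> 'a \<Rightarrow> real" where
  "Y k \<omega> = (if c k \<omega> \<in> {1, 4} then 1 else 0) - p"

lemma admissible_c:
  assumes "\<omega> \<in> space M"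
  shows "admissible (\<lambda>i. c i \<omega>) n"
  unfolding admissible_def
proof (intro allI impI)
  fix i assume "1 \<le> i \<and> i < n"
  then show "c i \<omega> < 5" using c_1[OF assms] c_ge_2[of i \<omega>] assms by (cases "i = 1") auto
qed

lemma pent_dist_c: "2 \<le> k \<Longrightarrow> \<omega> \<in> space M \<Longrightarrow> real (pent_dist 0 (c k \<omega>)) = 2 - p - Y k \<omega>"
  using c_ge_2[of k \<omega>] by (auto simp: Y_def pent_dist_def)

lemma gut_rv_eq:
  assumes "\<omega> \<in> space M"
  shows "gut_rv n \<omega> =
     gut (\<lambda>_. 0) n + (\<Sum>k\<in>{2..<n}. gut_coeff n k * (2 - p)) - (\<Sum>k\<in>{2..<n}. gut_coeff n k * Y k \<omega>)"
proof -
  have "(\<Sum>k\<in>{2..<n}. gut_coeff n k * real (pent_dist 0 (c k \<omega>)))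
      = (\<Sum>k\<in>{2..<n}. gut_coeff n k * (2 - p) - gut_coeff n k * Y k \<omega>)"
    by (intro sum.cong refl) (simp add: pent_dist_c[OF _ assms] right_diff_distrib)
  then show ?thesis
    unfolding gut_affine[OF admissible_c[OF assms]] by (simp add: sum_subtractf)
qed

sublocale Y: bounded_centered_indep M Y "{2..}" "p * (1 - p)"
proof
  have "indep_vars (\<lambda>_. borel) (\<lambda>k \<omega>. (\<lambda>b. (if b then 1 else 0) - p) (c k \<omega> \<in> {1, 4})) {2..}"
    by (rule indep_vars_compose2[OF indep]) simp
  then show "indep_vars (\<lambda>_. borel) Y {2..}" by (simp add: Y_def[abs_def] if_distrib)
  fix k :: nat and \<omega> assume "k \<in> {2..}"
  then have k: "2 \<le> k" by simp
  have "expectation (\<lambda>\<omega>. if c k \<omega> \<in> {1, 4} then 1 else 0)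
      = expectation (indicator {\<omega> \<in> space M. c k \<omega> \<in> {1, 4}})"
    by (rule Bochner_Integration.integral_cong) (auto simp: indicator_def)
  also have "\<dots> = p"
    using prob[OF k] by (simp add: Int_absorb2)
  finally have E_ind: "expectation (\<lambda>\<omega>. if c k \<omega> \<in> {1, 4} then 1 else 0) = p" .
  have int_ind: "integrable M (\<lambda>\<omega>. if c k \<omega> \<in> {1, 4} then 1 else 0 :: real)"
    by (rule integrable_const_bound[where B = 1]) auto
  show "\<omega> \<in> space M \<Longrightarrow> \<bar>Y k \<omega>\<bar> \<le> 1" using p_pos p_less_1 by (simp add: Y_def)
  show "expectation (Y k) = 0"
    using E_ind int_ind unfolding Y_def by (simp add: prob_space)
  have sq: "(\<lambda>\<omega>. (Y k \<omega>)\<^sup>2) = (\<lambda>\<omega>. (1 - 2 * p) * (if c k \<omega> \<in> {1, 4} then 1 else 0) + p\<^sup>2)"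
    by (rule ext) (simp add: Y_def power2_eq_square algebra_simps)
  show "expectation (\<lambda>\<omega>. (Y k \<omega>)\<^sup>2) = p * (1 - p)"
    unfolding sq using E_ind int_ind by (simp add: prob_space power2_eq_square algebra_simps)
qed

lemma gut_rv_centered:
  assumes "\<omega> \<in> space M"
  shows "gut_rv n \<omega> - expectation (gut_rv n) = - (\<Sum>k\<in>{2..<n}. gut_coeff n k * Y k \<omega>)"
proof -
  have "expectation (gut_rv n) = expectation (\<lambda>\<omega>.
      gut (\<lambda>_. 0) n + (\<Sum>k\<in>{2..<n}. gut_coeff n k * (2 - p)) - (\<Sum>k\<in>{2..<n}. gut_coeff n k * Y k \<omega>))"
    by (rule Bochner_Integration.integral_cong) (simp_all add: gut_rv_eq)
  also have "\<dots> = gut (\<lambda>_. 0) n + (\<Sum>k\<in>{2..<n}. gut_coeff n k * (2 - p))"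
  proof -
    have int: "integrable M (\<lambda>\<omega>. \<Sum>k\<in>{2..<n}. gut_coeff n k * Y k \<omega>)"
      by (auto intro!: integrable_mult_right Y.integrable_X)
    have "expectation (\<lambda>\<omega>. \<Sum>k\<in>{2..<n}. gut_coeff n k * Y k \<omega>) = 0"
      by (subst Bochner_Integration.integral_sum) (auto intro!: Y.integrable_X simp: Y.mean_zero)
    then show ?thesis by (simp add: Bochner_Integration.integral_diff[OF _ int] prob_space)
  qed
  finally show ?thesis using gut_rv_eq[OF assms] by simp
qed

lemma variance_gut_rv: "variance (gut_rv n) = p * (1 - p) * (\<Sum>k\<in>{2..<n}. (gut_coeff n k)\<^sup>2)"
proof -
  have "variance (gut_rv n) = expectation (\<lambda>\<omega>. (\<Sum>k\<in>{2..<n}. gut_coeff n k * Y k \<omega>)\<^sup>2)"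
    by (rule Bochner_Integration.integral_cong) (simp_all add: gut_rv_centered)
  then show ?thesis by (simp add: Y.expectation_weighted_sum_sq subset_iff)
qed

lemma standardized_gut_rv:
  assumes "\<omega> \<in> space M"
  shows "(gut_rv n \<omega> - expectation (gut_rv n)) / sqrt (variance (gut_rv n))
    = (\<Sum>k\<in>{2..<n}. - gut_coeff n k / sqrt (variance (gut_rv n)) * Y k \<omega>)"
  by (simp add: gut_rv_centered[OF assms] sum_divide_distrib sum_negf)

lemma gut_coeff_max_over_sd_tendsto_0:
  "(\<lambda>n. 144 * (real n)\<^sup>2 / sqrt (variance (gut_rv n))) \<longlonglongrightarrow> 0"
proof -
  have sd: "sqrt (variance (gut_rv n)) = sqrt (p * (1 - p) / 30) * (144 * sqrt ((real n - 1) ^ 5 - (real n - 1)))"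
    if "1 \<le> n" for n
  proof -
    have "sqrt (variance (gut_rv n)) = sqrt (p * (1 - p) / 30 * (144\<^sup>2 * ((real n - 1) ^ 5 - (real n - 1))))"
      unfolding variance_gut_rv sum_gut_coeff_sq[OF that] by (simp add: field_simps)
    then show ?thesis by (simp only: real_sqrt_mult real_sqrt_abs abs_numeral)
  qed
  have "(\<lambda>n. 1 / sqrt (p * (1 - p) / 30) * ((real n)\<^sup>2 / sqrt ((real n - 1) ^ 5 - (real n - 1))))
      \<longlonglongrightarrow> 1 / sqrt (p * (1 - p) / 30) * 0"
    by (intro tendsto_mult tendsto_const) real_asymp
  moreover have "eventually (\<lambda>n. 1 / sqrt (p * (1 - p) / 30) * ((real n)\<^sup>2 / sqrt ((real n - 1) ^ 5 - (real n - 1)))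
      = 144 * (real n)\<^sup>2 / sqrt (variance (gut_rv n))) sequentially"
    using eventually_ge_at_top[of 1] by eventually_elim (simp add: sd)
  ultimately show ?thesis by (simp add: Lim_transform_eventually)
qed

lemma weak_conv_standardized_gut_rv:
  "weak_conv_m (\<lambda>n. distr M borel (\<lambda>\<omega>. (gut_rv n \<omega> - expectation (gut_rv n)) / sqrt (variance (gut_rv n))))
     std_normal_distribution"
proof -
  define \<sigma> where "\<sigma> n = sqrt (variance (gut_rv n))" for n
  have sum_sq: "p * (1 - p) * (\<Sum>k\<in>{2..<n}. (- gut_coeff n k / \<sigma> n)\<^sup>2) = 1" if "3 \<le> n" for n
  proof -
    have "0 < (gut_coeff n 2)\<^sup>2" using that by (simp add: gut_coeff_def)
    also have "\<dots> \<le> (\<Sum>k\<in>{2..<n}. (gut_coeff n k)\<^sup>2)" using that by (intro member_le_sum) auto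
    finally show ?thesis using p_pos p_less_1
      by (simp add: \<sigma>_def variance_gut_rv power_divide sum_divide_distrib[symmetric])
  qed
  have bound: "\<bar>- gut_coeff n k / \<sigma> n\<bar> \<le> 144 * (real n)\<^sup>2 / \<sigma> n" if "k \<in> {2..<n}" for n k
    using abs_gut_coeff_le[OF that] by (simp add: \<sigma>_def divide_right_mono)
  have "weak_conv_m (\<lambda>n. distr M borel (\<lambda>\<omega>. \<Sum>k\<in>{2..<n}. - gut_coeff n k / \<sigma> n * Y k \<omega>))
      std_normal_distribution"
    using eventually_mono[OF eventually_ge_at_top[of 3] sum_sq] bound gut_coeff_max_over_sd_tendsto_0
    unfolding \<sigma>_def by (intro Y.weighted_sum_weak_conv_std_normal) auto
  moreover have "distr M borel (\<lambda>\<omega>. \<Sum>k\<in>{2..<n}. - gut_coeff n k / \<sigma> n * Y k \<omega>)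
      = distr M borel (\<lambda>\<omega>. (gut_rv n \<omega> - expectation (gut_rv n)) / sqrt (variance (gut_rv n)))" for n
    by (rule distr_cong) (simp_all add: standardized_gut_rv \<sigma>_def)
  ultimately show ?thesis by simp
qed

theorem gut_rv_asymptotically_normal:
  "(\<lambda>n. SUP a::real. \<bar>measure M {\<omega> \<in> space M.
      (gut_rv n \<omega> - expectation (gut_rv n)) / sqrt (variance (gut_rv n)) \<le> a}
      - (LBINT t:{..a}. (exp (- (t^2) / 2) / sqrt (2 * pi)))\<bar>) \<longlonglongrightarrow> 0"
proof -
  let ?S = "\<lambda>n \<omega>. (gut_rv n \<omega> - expectation (gut_rv n)) / sqrt (variance (gut_rv n))"
  have "random_variable borel (?S n)" for n
  proof -
    have "?S n \<in> borel_measurable M \<longleftrightarrow>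
        (\<lambda>\<omega>. \<Sum>k\<in>{2..<n}. - gut_coeff n k / sqrt (variance (gut_rv n)) * Y k \<omega>) \<in> borel_measurable M"
      by (rule measurable_cong) (rule standardized_gut_rv)
    then show ?thesis
      by (auto intro!: borel_measurable_sum borel_measurable_times borel_measurable_const Y.measurable_X)
  qed
  then have "measure M {\<omega> \<in> space M. ?S n \<omega> \<le> a} = cdf (distr M borel (?S n)) a" for n a
    by (simp add: cdf_def measure_distr vimage_def Int_def conj_commute)
  with weak_conv_std_normal_imp_uniform_cdf[OF _ weak_conv_standardized_gut_rv] show ?thesis
    by (simp add: cdf_std_normal_eq_integral \<open>\<And>n. random_variable borel (?S n)\<close>)
qed

end

lemma variance_formula_paper_form:
  "(let s1 = 288^2 * p1 + 432^2 * (1 - p1) - (288 * p1 + 432 * (1 - p1))^2;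
        s1t = 156^2 * p1 + 300^2 * (1 - p1) - (156 * p1 + 300 * (1 - p1))^2;
        r1 = 288 * 156 * p1 + 432 * 300 * (1 - p1)
             - (288 * p1 + 432 * (1 - p1)) * (156 * p1 + 300 * (1 - p1));
        x = real n
    in (s1 * x^5 - 5 * r1 * x^4 + 10 * s1t * x^3
        + (65 * r1 - 30 * s1 - 45 * s1t) * x^2
        + (59 * s1 + 65 * s1t - 120 * r1) * x
        + (60 * r1 - 30 * s1 - 30 * s1t)) / 30)
   = p1 * (1 - p1) * (144\<^sup>2 * ((real n - 1) ^ 5 - (real n - 1)) / 30)"
proof -
  have "288^2 * p1 + 432^2 * (1 - p1) - (288 * p1 + 432 * (1 - p1))^2 = 144\<^sup>2 * (p1 * (1 - p1))"
    "156^2 * p1 + 300^2 * (1 - p1) - (156 * p1 + 300 * (1 - p1))^2 = 144\<^sup>2 * (p1 * (1 - p1))"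
    "288 * 156 * p1 + 432 * 300 * (1 - p1) - (288 * p1 + 432 * (1 - p1)) * (156 * p1 + 300 * (1 - p1))
      = 144\<^sup>2 * (p1 * (1 - p1))"
    by (simp_all add: power2_eq_square algebra_simps)
  then show ?thesis unfolding Let_def by (simp add: eval_nat_numeral algebra_simps)
qed

theorem theorem3p1:
  fixes M :: "'a measure" and c :: "nat \<Rightarrow> 'a \<Rightarrow> nat" and p1 :: real
  assumes "prob_space M"
    and meas: "\<And>n. c n \<in> measurable M (count_space UNIV)"
    and u1: "\<And>\<omega>. \<omega> \<in> space M \<Longrightarrow> c 1 \<omega> < 5"
    and un: "\<And>n \<omega>. n \<ge> 2 \<Longrightarrow> \<omega> \<in> space M \<Longrightarrow> c n \<omega> \<in> {1, 2, 3, 4}"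
    and hyp1: "prob_space.indep_vars M (\<lambda>_. count_space UNIV) (\<lambda>n \<omega>. c n \<omega> \<in> {1, 4}) {2..}"
    and p1: "\<And>n. n \<ge> 2 \<Longrightarrow> measure M {\<omega> \<in> space M. c n \<omega> \<in> {1, 4}} = p1"
    and hyp2: "0 < p1" "p1 < 1"
  shows "(\<forall>n\<ge>1. prob_space.variance M (\<lambda>\<omega>. gut (\<lambda>i. c i \<omega>) n) =
            (let s1 = 288^2 * p1 + 432^2 * (1 - p1) - (288 * p1 + 432 * (1 - p1))^2;
                 s1t = 156^2 * p1 + 300^2 * (1 - p1) - (156 * p1 + 300 * (1 - p1))^2;
                 r1 = 288 * 156 * p1 + 432 * 300 * (1 - p1)
                      - (288 * p1 + 432 * (1 - p1)) * (156 * p1 + 300 * (1 - p1));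
                 x = real n
             in (s1 * x^5 - 5 * r1 * x^4 + 10 * s1t * x^3
                 + (65 * r1 - 30 * s1 - 45 * s1t) * x^2
                 + (59 * s1 + 65 * s1t - 120 * r1) * x
                 + (60 * r1 - 30 * s1 - 30 * s1t)) / 30))
       \<and> (\<lambda>n. SUP a::real. \<bar>measure M {\<omega> \<in> space M.
              (gut (\<lambda>i. c i \<omega>) n - prob_space.expectation M (\<lambda>\<omega>'. gut (\<lambda>i. c i \<omega>') n))
                / sqrt (prob_space.variance M (\<lambda>\<omega>'. gut (\<lambda>i. c i \<omega>') n)) \<le> a}
              - (LBINT t:{..a}. (exp (- (t^2) / 2) / sqrt (2 * pi)))\<bar>)
         \<longlonglongrightarrow> 0"
proof -
  interpret random_pentagonal_chain M c p1
    using assms by (intro random_pentagonal_chain.intro random_pentagonal_chain_axioms.intro) auto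
  show ?thesis
    unfolding variance_formula_paper_form
    using variance_gut_rv sum_gut_coeff_sq gut_rv_asymptotically_normal by simp
qed

end
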